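(* Let $I$ be an interval with $1\in I\subset\,]0,\infty[$. Let $\lambda,\mu,\tilde\mu\in C^1(I\times\mathbb{R})$ be $1$-periodic in $r$ with $\dot\lambda\in C^1(I\times\mathbb{R})$, and let $\psi\in C^1(\mathbb{R})$, $\overset{\circ}{\phi}\in C^2(\mathbb{R})$ be $1$-periodic; write $\overset{\circ}{\lambda}=\lambda(1,\cdot)$, $\overset{\circ}{\mu}=\mu(1,\cdot)$. Define $D^{\pm}=e^{-\mu}\partial_t\pm e^{-\lambda}\partial_r$ and $$\tilde a=\Big(-\dot\lambda-\frac1t\Big)e^{-\mu}-\tilde\mu e^{-\lambda},\quad b=-\frac{e^{-\mu}}{t},\quad \tilde c=\Big(-\dot\lambda-\frac1t\Big)e^{-\mu}+\tilde\mu e^{-\lambda},$$ $$b_1=\Big(-2\dot\lambda-\frac1t\Big)e^{-\mu}-(\tilde\mu+\mu')e^{-\lambda},\quad b_2=-\frac{e^{-\mu}}{t},\quad b_3=-\dot\lambda'e^{-\mu-\lambda}+(\lambda'\tilde\mu-\tilde\mu\mu'-\tilde\mu')e^{-2\lambda},$$ $$b_4=\Big(-2\dot\lambda-\frac1t\Big)e^{-\mu}+(\tilde\mu+\mu')e^{-\lambda},\quad b_5=-\dot\lambda'e^{-\mu-\lambda}-(\lambda'\tilde\mu-\tilde\mu\mu'-\tilde\mu')e^{-2\lambda}.$$ Let $X,Y\in C^1(I\times\mathbb{R})$ be $1$-periodic in $r$ and solve $D^+X=\tilde aX+bY$, $D^-Y=bX+\tilde cY$ with $X(1,r)=e^{-\overset{\circ}{\mu}(r)}\psi(r)-e^{-\overset{\circ}{\lambda}(r)}\overset{\circ}{\phi}'(r)$,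 $Y(1,r)=e^{-\overset{\circ}{\mu}(r)}\psi(r)+e^{-\overset{\circ}{\lambda}(r)}\overset{\circ}{\phi}'(r)$. Let $X_1,Y_1\in C^1(I\times\mathbb{R})$ be $1$-periodic in $r$ and solve $$D^+X_1=b_1X_1+b_2Y_1+b_3X,\qquad D^-Y_1=b_2X_1+b_4Y_1+b_5Y$$ with $X_1(1,\cdot)=e^{-\lambda(1,\cdot)}\partial_rX(1,\cdot)$ and $Y_1(1,\cdot)=e^{-\lambda(1,\cdot)}\partial_rY(1,\cdot)$. Set $K(t)=\sup_{r}(X^2+Y^2)^{1/2}(t,r)$ and $$A_0=2\sup_{r\in\mathbb{R}}\Big[(|\psi'|+|\overset{\circ}{\mu}'||\psi|)e^{-\overset{\circ}{\mu}-\overset{\circ}{\lambda}}+(|\overset{\circ}{\phi}''|+|\overset{\circ}{\lambda}'||\overset{\circ}{\phi}'|)e^{-2\overset{\circ}{\lambda}}\Big](r),\qquad A(t)=\sup_{r\in\mathbb{R}}\big(X_1^2+Y_1^2\big)^{1/2}(t,r),$$ $$v(t)=\sup_{r}\Big(\frac2t+2|\dot\lambda|+(|\tilde\mu|+|\mu'|)e^{\mu-\lambda}\Big)(t,r),\quad h(t)=\sup_r\Big[|\dot\lambda'|e^{-\lambda}+(|\mu'||\tilde\mu|+|\lambda'||\tilde\mu|+|\tilde\mu'|)e^{\mu-2\lambda}\Big](t,r).$$ Then for $t\in I$ with $t\le 1$, $$A(t)\le A_0+3\int_t^1\big(v(s)A(s)+h(s)K(s)\big)\,ds,$$ and for $t\in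 I$ with $t\ge1$ the same estimate holds with $\int_t^1$ replaced by $\int_1^t$.
   Context: A dot denotes $\partial_t$ and a prime denotes $\partial_r$. All functions of $(t,r)$ are periodic in $r$ with period 1. *)

theory Defs
  imports "HOL-Analysis.Analysis"
begin

text \<open>Functions of (t,r) are modelled as real => real => real, first argument t.\<close>

text \<open>Partial derivative in t (dot), taken within the interval I (one-sided at endpoints).\<close>
definition dtI :: "real set \<Rightarrow> (real \<Rightarrow> real \<Rightarrow> real) \<Rightarrow> real \<Rightarrow> real \<Rightarrow> real" where
  "dtI I f t r = vector_derivative (\<lambda>s. f s r) (at t within I)"

definition dr :: "(real \<Rightarrow> real \<Rightarrow> real) \<Rightarrow> real \<Rightarrow> real \<Rightarrow> real" where
  "dr f t r = deriv (\<lambda>x. f t x) r"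

definition C1_on :: "real set \<Rightarrow> (real \<Rightarrow> real \<Rightarrow> real) \<Rightarrow> bool" where
  "C1_on I f \<longleftrightarrow>
     (\<forall>t\<in>I. \<forall>r. (\<lambda>s. f s r) differentiable (at t within I) \<and> (\<lambda>x. f t x) differentiable (at r)) \<and>
     continuous_on (I \<times> UNIV) (\<lambda>(t,r). f t r) \<and>
     continuous_on (I \<times> UNIV) (\<lambda>(t,r). dtI I f t r) \<and>
     continuous_on (I \<times> UNIV) (\<lambda>(t,r). dr f t r)"

definition C1_real :: "(real \<Rightarrow> real) \<Rightarrow> bool" where
  "C1_real g \<longleftrightarrow> (\<forall>x. g differentiable (at x)) \<and> continuous_on UNIV (deriv g)"

definition C2_real :: "(real \<Rightarrow> real) \<Rightarrow> bool" where
  "C2_real g \<longleftrightarrow> (\<forall>x. g differentiable (at x)) \<and> (\<forall>x. deriv g differentiable (at x))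
      \<and> continuous_on UNIV (deriv (deriv g))"

definition periodic_r :: "real set \<Rightarrow> (real \<Rightarrow> real \<Rightarrow> real) \<Rightarrow> bool" where
  "periodic_r I f \<longleftrightarrow> (\<forall>t\<in>I. \<forall>r. f t (r + 1) = f t r)"

definition periodic1 :: "(real \<Rightarrow> real) \<Rightarrow> bool" where
  "periodic1 g \<longleftrightarrow> (\<forall>r. g (r + 1) = g r)"

end

(*
  Let Z be X1 or Y1 and P(t) = sup_r |Z(t, r)|. By periodicity the supremum is attained at some r0,
  where the r-derivative of Z(t, .) vanishes. There the transport equation for Z reduces to
  exp(-mu) dZ/dt = b1 X1 + b2 Y1 + b3 X (resp. b2 X1 + b4 Y1 + b5 Y), and the pointwise bounds on
  exp(mu) b_i by the integrands of v and h give |dZ/dt| <= v A + h K. As |Z(s, r0)| <= P(s) with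
  equality at s = t, the lower Dini derivatives of P are at least -(v A + h K) in both time directions,
  whence |P(t) - P(1)| <= |int_1^t (v A + h K)|. Summing over X1 and Y1, using A <= sup |X1| + sup |Y1|,
  and bounding P(1) by differentiating the Cauchy data gives A(t) <= A0 + 2 |int_1^t (v A + h K)|.
*)

theory Submission
  imports Defs "HOL-Library.Periodic_Fun"
begin

section \<open>Periodic functions and suprema in r\<close>

lemma periodic_r_iff_periodic1: "periodic_r I f \<longleftrightarrow> (\<forall>t\<in>I. periodic1 (f t))"
  by (simp add: periodic_r_def periodic1_def)

lemma periodic1_deriv: "periodic1 g \<Longrightarrow> periodic1 (deriv g)"
  unfolding periodic1_def deriv_def by (simp add: DERIV_shift)

lemma periodic_r_dr: "periodic_r I f \<Longrightarrow> periodic_r I (dr f)"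
  by (simp add: periodic_r_iff_periodic1 periodic1_deriv dr_def[abs_def])

lemma periodic_r_dtI: "periodic_r I f \<Longrightarrow> periodic_r I (dtI I f)"
  unfolding periodic_r_def dtI_def by (auto intro: vector_derivative_cong_eq)

lemma periodic1_range_eq: "periodic1 g \<Longrightarrow> range g = g ` {0..1}"
proof -
  assume "periodic1 g"
  then interpret periodic_fun_simple' g
    by unfold_locales (simp add: periodic1_def)
  have "g x = g (frac x)" for x
    using plus_of_int[of "frac x" "\<lfloor>x\<rfloor>"] by (simp add: frac_def)
  moreover have "frac x \<in> {0..1}" for x
    by (simp add: frac_ge_0 frac_lt_1 less_imp_le)
  ultimately show ?thesis by blast
qed

lemma periodic1_continuous_attains_max:
  assumes "periodic1 g" and "continuous_on UNIV g"
  obtains r0 where "r0 \<in> {0..1}" and "\<And>x. g x \<le> g r0"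
proof -
  obtain r0 where r0: "r0 \<in> {0..1}" "\<forall>y\<in>{0..1}. g y \<le> g r0"
    using continuous_attains_sup[OF compact_Icc _ continuous_on_subset[OF assms(2)], of 0 1] by auto
  moreover have "g x \<le> g r0" for x
    using r0 periodic1_range_eq[OF assms(1)] by (metis image_iff rangeI)
  ultimately show ?thesis using that by blast
qed

lemma periodic1_continuous_SUP_attained:
  assumes "periodic1 g" and "continuous_on UNIV g"
  obtains r0 where "r0 \<in> {0..1}" and "(SUP r. g r) = g r0" and "\<And>x. g x \<le> g r0"
proof -
  obtain r0 where "r0 \<in> {0..1}" "\<And>x. g x \<le> g r0"
    using periodic1_continuous_attains_max[OF assms] by blast
  moreover from this have "(SUP r. g r) = g r0"
    by (intro cSup_eq_maximum) auto
  ultimately show ?thesis using that by blast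
qed

lemma periodic1_continuous_le_SUP:
  assumes "periodic1 g" and "continuous_on UNIV g"
  shows "g x \<le> (SUP r. g r)"
  using periodic1_continuous_SUP_attained[OF assms] by metis

lemma continuous_on_slice:
  assumes "continuous_on (J \<times> UNIV) (\<lambda>(t, r). f t r)" and "t \<in> J"
  shows "continuous_on UNIV (f t)"
proof -
  have "continuous_on UNIV (\<lambda>r. (\<lambda>(t, r). f t r) (t, r))"
    by (rule continuous_on_compose2[OF assms(1)]) (use assms(2) in \<open>auto intro!: continuous_intros\<close>)
  then show ?thesis by simp
qed

lemma C1_on_continuous_on:
  assumes "C1_on I f"
  shows "continuous_on (I \<times> UNIV) (\<lambda>p. f (fst p) (snd p))"
    and "continuous_on (I \<times> UNIV) (\<lambda>p. dtI I f (fst p) (snd p))"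
    and "continuous_on (I \<times> UNIV) (\<lambda>p. dr f (fst p) (snd p))"
  using assms by (simp_all add: C1_on_def case_prod_unfold)

lemma C1_on_slice_C1_real:
  assumes "C1_on I f" and "t \<in> I"
  shows "C1_real (f t)"
proof -
  have "dr f t = deriv (f t)"
    by (simp add: dr_def fun_eq_iff)
  with assms continuous_on_slice[of I "dr f" t] show ?thesis
    by (simp add: C1_on_def C1_real_def)
qed

lemma C2_real_deriv_C1_real: "C2_real g \<Longrightarrow> C1_real (deriv g)"
  by (simp add: C2_real_def C1_real_def)

lemma C1_real_continuous: "C1_real g \<Longrightarrow> continuous_on UNIV g"
  by (simp add: C1_real_def continuous_at_imp_continuous_on differentiable_imp_continuous_within)

lemma periodic_r_continuous_SUP_attained:
  fixes f :: "real \<Rightarrow> real \<Rightarrow> real"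
  assumes "continuous_on (J \<times> UNIV) (\<lambda>(t, r). f t r)" and "periodic_r J f" and "t \<in> J"
  obtains r0 where "r0 \<in> {0..1}" and "(SUP r. f t r) = f t r0" and "\<And>x. f t x \<le> f t r0"
  using periodic1_continuous_SUP_attained[of "f t"] continuous_on_slice[OF assms(1,3)] assms(2,3)
  by (metis periodic_r_iff_periodic1)

lemma periodic_r_continuous_le_SUP:
  fixes f :: "real \<Rightarrow> real \<Rightarrow> real"
  assumes "continuous_on (J \<times> UNIV) (\<lambda>(t, r). f t r)" and "periodic_r J f" and "t \<in> J"
  shows "f t x \<le> (SUP r. f t r)"
  using periodic_r_continuous_SUP_attained[OF assms] by metis

lemma continuous_on_SUP_periodic_r:
  fixes f :: "real \<Rightarrow> real \<Rightarrow> real"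
  assumes f: "continuous_on (J \<times> UNIV) (\<lambda>(t, r). f t r)" and per: "periodic_r J f"
    and "compact K" and "K \<subseteq> J"
  shows "continuous_on K (\<lambda>t. SUP r. f t r)"
  unfolding continuous_on_iff
proof (intro ballI allI impI)
  fix t e :: real assume t: "t \<in> K" and e: "e > 0"
  have "uniformly_continuous_on (K \<times> {0..1}) (\<lambda>(t, r). f t r)"
    using assms by (intro compact_uniformly_continuous continuous_on_subset[OF f] compact_Times) auto
  then obtain d where d: "d > 0" and
    close: "\<And>s t r. s \<in> K \<Longrightarrow> t \<in> K \<Longrightarrow> r \<in> {0..1} \<Longrightarrow> dist s t < d \<Longrightarrow> \<bar>f s r - f t r\<bar> < e"
    unfolding uniformly_continuous_on_def using e
    by (fastforce simp: dist_Pair_Pair dist_real_def)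
  have maximiser: "\<exists>r0\<in>{0..1}. (SUP r. f s r) = f s r0 \<and> (\<forall>x. f s x \<le> f s r0)" if "s \<in> K" for s
    using periodic_r_continuous_SUP_attained[OF f per] that \<open>K \<subseteq> J\<close> by (metis subsetD)
  show "\<exists>d>0. \<forall>s\<in>K. dist s t < d \<longrightarrow> dist (SUP r. f s r) (SUP r. f t r) < e"
  proof (intro exI[of _ d] conjI ballI impI d)
    fix s assume s: "s \<in> K" and "dist s t < d"
    then have "dist t s < d" by (simp add: dist_commute)
    obtain rs where rs: "rs \<in> {0..1}" "(SUP r. f s r) = f s rs" "f t rs \<le> (SUP r. f t r)"
      using maximiser[OF s] maximiser[OF t] by metis
    obtain rt where rt: "rt \<in> {0..1}" "(SUP r. f t r) = f t rt" "f s rt \<le> (SUP r. f s r)"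
      using maximiser[OF s] maximiser[OF t] by metis
    show "dist (SUP r. f s r) (SUP r. f t r) < e"
      using close[OF s t rs(1) \<open>dist s t < d\<close>] close[OF t s rt(1) \<open>dist t s < d\<close>] rs rt
      by (simp add: dist_real_def abs_less_iff)
  qed
qed

lemma continuous_on_periodic_r_abs:
  assumes "continuous_on (J \<times> UNIV) (\<lambda>(t, r). X t r)" and "periodic_r J X"
  shows "continuous_on (J \<times> UNIV) (\<lambda>(t, r). \<bar>X t r\<bar>)" and "periodic_r J (\<lambda>t r. \<bar>X t r\<bar>)"
  using continuous_on_rabs[OF assms(1)] assms(2) by (simp_all add: case_prod_unfold periodic_r_def)

lemma continuous_on_periodic_r_norm:
  assumes "continuous_on (J \<times> UNIV) (\<lambda>(t, r). X t r)" and "continuous_on (J \<times> UNIV) (\<lambda>(t, r). Y t r)"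
    and "periodic_r J X" and "periodic_r J Y"
  shows "continuous_on (J \<times> UNIV) (\<lambda>(t, r). sqrt ((X t r)\<^sup>2 + (Y t r)\<^sup>2))"
    and "periodic_r J (\<lambda>t r. sqrt ((X t r)\<^sup>2 + (Y t r)\<^sup>2))"
  using assms unfolding case_prod_unfold by (auto intro!: continuous_intros simp: periodic_r_def)

section \<open>Dini derivatives and the supremum of a solution\<close>

lemma le_add_if_right_slope_ge:
  fixes \<Psi> :: "real \<Rightarrow> real"
  assumes ab: "a \<le> b" and cont: "continuous_on {a..b} \<Psi>"
    and slope: "\<And>\<tau>. \<tau> \<in> {a..<b} \<Longrightarrow>
      \<exists>\<delta>>0. \<forall>s. \<tau> < s \<and> s < \<tau> + \<delta> \<and> s \<le> b \<longrightarrow> \<Psi> \<tau> - \<epsilon> * (s - \<tau>) \<le> \<Psi> s"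
  shows "\<Psi> a - \<epsilon> * (b - a) \<le> \<Psi> b"
proof -
  define S where "S = {x\<in>{a..b}. \<Psi> a - \<epsilon> * (x - a) \<le> \<Psi> x}"
  have "closed S"
    unfolding S_def by (rule continuous_on_closed_Collect_le) (auto intro!: continuous_intros cont)
  moreover have "a \<in> S" and bdd: "bdd_above S"
    using ab by (auto simp: S_def intro: bdd_aboveI[of _ b])
  ultimately have cS: "Sup S \<in> S"
    using closed_contains_Sup by blast
  have "Sup S = b"
  proof (rule ccontr)
    assume "Sup S \<noteq> b"
    with cS have c: "Sup S \<in> {a..<b}" by (simp add: S_def)
    then obtain \<delta> where "\<delta> > 0" and
      \<delta>: "\<And>s. Sup S < s \<Longrightarrow> s < Sup S + \<delta> \<Longrightarrow> s \<le> b \<Longrightarrow> \<Psi> (Sup S) - \<epsilon> * (s - Sup S) \<le> \<Psi> s"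
      using slope by blast
    define s where "s = min (Sup S + \<delta>/2) b"
    have s: "Sup S < s" "s < Sup S + \<delta>" "s \<le> b"
      using \<open>\<delta> > 0\<close> c by (auto simp: s_def)
    have "\<Psi> a - \<epsilon> * (Sup S - a) \<le> \<Psi> (Sup S)"
      using cS by (simp add: S_def)
    with \<delta>[OF s] have "\<Psi> a - \<epsilon> * (s - a) \<le> \<Psi> s"
      by (simp add: algebra_simps)
    then have "s \<in> S"
      using s c by (simp add: S_def)
    then have "s \<le> Sup S" using bdd by (rule cSup_upper)
    with s show False by simp
  qed
  with cS show ?thesis by (simp add: S_def)
qed

lemma right_lower_Dini_nonneg_imp_le:
  fixes \<Psi> :: "real \<Rightarrow> real"
  assumes ab: "a \<le> b" and cont: "continuous_on {a..b} \<Psi>"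
    and slope: "\<And>\<tau> \<epsilon>. \<tau> \<in> {a..<b} \<Longrightarrow> \<epsilon> > 0 \<Longrightarrow>
      \<exists>\<delta>>0. \<forall>s. \<tau> < s \<and> s < \<tau> + \<delta> \<and> s \<le> b \<longrightarrow> \<Psi> \<tau> - \<epsilon> * (s - \<tau>) \<le> \<Psi> s"
  shows "\<Psi> a \<le> \<Psi> b"
proof (rule field_le_epsilon)
  fix e :: real assume "e > 0"
  with ab have "\<Psi> a - e / (b - a + 1) * (b - a) \<le> \<Psi> b"
    by (intro le_add_if_right_slope_ge[OF ab cont] slope) simp_all
  moreover have "e / (b - a + 1) * (b - a) \<le> e"
    using ab \<open>e > 0\<close> by (simp add: field_simps)
  ultimately show "\<Psi> a \<le> \<Psi> b + e" by linarith
qed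

lemma le_add_integral_if_right_slope_bound:
  fixes P F :: "real \<Rightarrow> real"
  assumes ab: "a \<le> b" and P: "continuous_on {a..b} P" and F: "continuous_on {a..b} F"
    and slope: "\<And>\<tau> \<epsilon>. \<tau> \<in> {a..<b} \<Longrightarrow> \<epsilon> > 0 \<Longrightarrow>
      \<exists>\<delta>>0. \<forall>s. \<tau> < s \<and> s < \<tau> + \<delta> \<and> s \<le> b \<longrightarrow> P \<tau> - P s \<le> (s - \<tau>) * (F \<tau> + \<epsilon>)"
  shows "P a \<le> P b + integral {a..b} F"
proof -
  define G where "G u = integral {a..u} F" for u
  have G': "(G has_vector_derivative F \<tau>) (at \<tau> within {a..b})" if "\<tau> \<in> {a..b}" for \<tau>
    unfolding G_def[abs_def] by (rule integral_has_vector_derivative[OF F that])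
  then have G: "continuous_on {a..b} G"
    by (meson continuous_on_eq_continuous_within has_vector_derivative_continuous)
  have "P a + G a \<le> P b + G b"
  proof (rule right_lower_Dini_nonneg_imp_le[OF ab, of "\<lambda>x. P x + G x"])
    show "continuous_on {a..b} (\<lambda>x. P x + G x)" by (intro continuous_intros P G)
    fix \<tau> \<epsilon> :: real assume \<tau>: "\<tau> \<in> {a..<b}" and \<epsilon>: "\<epsilon> > 0"
    obtain \<delta>1 where "\<delta>1 > 0" and
      \<delta>1: "\<forall>s. \<tau> < s \<and> s < \<tau> + \<delta>1 \<and> s \<le> b \<longrightarrow> P \<tau> - P s \<le> (s - \<tau>) * (F \<tau> + \<epsilon>/2)"
      using slope[OF \<tau>, of "\<epsilon>/2"] \<epsilon> by auto
    have "\<forall>e>0. \<exists>d>0. \<forall>s\<in>{a..b}. \<bar>s - \<tau>\<bar> < d \<longrightarrow> \<bar>G s - G \<tau> - (s - \<tau>) * F \<tau>\<bar> \<le> e * \<bar>s - \<tau>\<bar>"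
      using G'[of \<tau>] \<tau> unfolding has_vector_derivative_def has_derivative_within_alt by auto
    with \<epsilon> obtain \<delta>2 where "\<delta>2 > 0" and
      \<delta>2: "\<forall>s\<in>{a..b}. \<bar>s - \<tau>\<bar> < \<delta>2 \<longrightarrow> \<bar>G s - G \<tau> - (s - \<tau>) * F \<tau>\<bar> \<le> \<epsilon>/2 * \<bar>s - \<tau>\<bar>"
      by (meson half_gt_zero)
    show "\<exists>\<delta>>0. \<forall>s. \<tau> < s \<and> s < \<tau> + \<delta> \<and> s \<le> b \<longrightarrow> P \<tau> + G \<tau> - \<epsilon> * (s - \<tau>) \<le> P s + G s"
    proof (intro exI[of _ "min \<delta>1 \<delta>2"] conjI allI impI)
      fix s assume s: "\<tau> < s \<and> s < \<tau> + min \<delta>1 \<delta>2 \<and> s \<le> b"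
      with \<tau> have "s \<in> {a..b}" "\<bar>s - \<tau>\<bar> < \<delta>2" and abs: "\<bar>s - \<tau>\<bar> = s - \<tau>"
        by auto
      with s \<delta>1 \<delta>2[rule_format, OF this(1,2)] have "P \<tau> - P s \<le> (s - \<tau>) * (F \<tau> + \<epsilon>/2)"
        and "\<bar>G s - G \<tau> - (s - \<tau>) * F \<tau>\<bar> \<le> \<epsilon>/2 * (s - \<tau>)"
        by auto
      then show "P \<tau> + G \<tau> - \<epsilon> * (s - \<tau>) \<le> P s + G s"
        unfolding abs_le_iff by (simp add: field_simps)
    qed (use \<open>\<delta>1 > 0\<close> \<open>\<delta>2 > 0\<close> in simp)
  qed
  then show ?thesis
    by (simp add: G_def)
qed

lemma abs_diff_le_integral_if_local_slope_bound:
  fixes P F :: "real \<Rightarrow> real"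
  assumes ab: "a \<le> b" and P: "continuous_on {a..b} P" and F: "continuous_on {a..b} F"
    and slope: "\<And>\<tau> \<epsilon>. \<tau> \<in> {a..b} \<Longrightarrow> \<epsilon> > 0 \<Longrightarrow>
      \<exists>\<delta>>0. \<forall>s\<in>{a..b}. \<bar>s - \<tau>\<bar> < \<delta> \<longrightarrow> P \<tau> - P s \<le> \<bar>s - \<tau>\<bar> * (F \<tau> + \<epsilon>)"
  shows "\<bar>P b - P a\<bar> \<le> integral {a..b} F"
proof -
  have "P a \<le> P b + integral {a..b} F"
  proof (rule le_add_integral_if_right_slope_bound[OF ab P F])
    fix \<tau> \<epsilon> :: real assume "\<tau> \<in> {a..<b}" and "\<epsilon> > 0"
    with slope[of \<tau> \<epsilon>] obtain \<delta> where "\<delta> > 0"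
      and \<delta>: "\<forall>s\<in>{a..b}. \<bar>s - \<tau>\<bar> < \<delta> \<longrightarrow> P \<tau> - P s \<le> \<bar>s - \<tau>\<bar> * (F \<tau> + \<epsilon>)" by auto
    show "\<exists>\<delta>>0. \<forall>s. \<tau> < s \<and> s < \<tau> + \<delta> \<and> s \<le> b \<longrightarrow> P \<tau> - P s \<le> (s - \<tau>) * (F \<tau> + \<epsilon>)"
    proof (intro exI[of _ \<delta>] conjI allI impI \<open>\<delta> > 0\<close>)
      fix s assume "\<tau> < s \<and> s < \<tau> + \<delta> \<and> s \<le> b"
      with \<open>\<tau> \<in> {a..<b}\<close> have "s \<in> {a..b}" "\<bar>s - \<tau>\<bar> < \<delta>" "\<bar>s - \<tau>\<bar> = s - \<tau>" by auto
      with \<delta> show "P \<tau> - P s \<le> (s - \<tau>) * (F \<tau> + \<epsilon>)" by metis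
    qed
  qed
  moreover have "P (- (- b)) \<le> P (- (- a)) + integral {- b..- a} (\<lambda>x. F (- x))"
  proof (rule le_add_integral_if_right_slope_bound[of "- b" "- a" "\<lambda>x. P (- x)"])
    show "continuous_on {- b..- a} (\<lambda>x. P (- x))" "continuous_on {- b..- a} (\<lambda>x. F (- x))"
      by (auto intro!: continuous_on_compose2[OF P] continuous_on_compose2[OF F] continuous_intros)
    fix \<tau> \<epsilon> :: real assume "\<tau> \<in> {- b..<- a}" and "\<epsilon> > 0"
    with slope[of "- \<tau>" \<epsilon>] obtain \<delta> where "\<delta> > 0"
      and \<delta>: "\<forall>s\<in>{a..b}. \<bar>s + \<tau>\<bar> < \<delta> \<longrightarrow> P (- \<tau>) - P s \<le> \<bar>s + \<tau>\<bar> * (F (- \<tau>) + \<epsilon>)" by auto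
    show "\<exists>\<delta>>0. \<forall>s. \<tau> < s \<and> s < \<tau> + \<delta> \<and> s \<le> - a \<longrightarrow> P (- \<tau>) - P (- s) \<le> (s - \<tau>) * (F (- \<tau>) + \<epsilon>)"
    proof (intro exI[of _ \<delta>] conjI allI impI \<open>\<delta> > 0\<close>)
      fix s assume "\<tau> < s \<and> s < \<tau> + \<delta> \<and> s \<le> - a"
      with \<open>\<tau> \<in> {- b..<- a}\<close> have "- s \<in> {a..b}" "\<bar>- s + \<tau>\<bar> < \<delta>" "\<bar>- s + \<tau>\<bar> = s - \<tau>" by auto
      with \<delta> show "P (- \<tau>) - P (- s) \<le> (s - \<tau>) * (F (- \<tau>) + \<epsilon>)" by metis
    qed
  qed (use ab in simp)
  ultimately show ?thesis
    by simp
qed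

lemma DERIV_abs_max_eq_0:
  fixes g :: "real \<Rightarrow> real"
  assumes g': "(g has_real_derivative l) (at x)" and max: "\<And>y. \<bar>g y\<bar> \<le> \<bar>g x\<bar>"
  shows "l = 0"
proof (cases "g x \<ge> 0")
  case True
  with max have "\<forall>y. \<bar>x - y\<bar> < 1 \<longrightarrow> g y \<le> g x"
    by (metis abs_le_D1 abs_of_nonneg)
  with DERIV_local_max[OF g' zero_less_one] show ?thesis .
next
  case False
  with max have "\<forall>y. \<bar>x - y\<bar> < 1 \<longrightarrow> g x \<le> g y"
    by (simp add: abs_le_iff)
  with DERIV_local_min[OF g' zero_less_one] show ?thesis .
qed

lemma local_slope_bound_at_touching_point:
  fixes P z :: "real \<Rightarrow> real"
  assumes z': "(z has_vector_derivative D) (at \<tau> within S)" and D: "\<bar>D\<bar> \<le> B"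
    and touch: "P \<tau> = \<bar>z \<tau>\<bar>" and below: "\<And>s. s \<in> S \<Longrightarrow> \<bar>z s\<bar> \<le> P s" and \<epsilon>: "\<epsilon> > 0"
  shows "\<exists>\<delta>>0. \<forall>s\<in>S. \<bar>s - \<tau>\<bar> < \<delta> \<longrightarrow> P \<tau> - P s \<le> \<bar>s - \<tau>\<bar> * (B + \<epsilon>)"
proof -
  obtain \<delta> where "\<delta> > 0" and \<delta>: "\<forall>s\<in>S. \<bar>s - \<tau>\<bar> < \<delta> \<longrightarrow> \<bar>z s - z \<tau> - (s - \<tau>) * D\<bar> \<le> \<epsilon> * \<bar>s - \<tau>\<bar>"
    using z' \<epsilon> unfolding has_vector_derivative_def has_derivative_within_alt by (auto simp: mult.commute)
  have "P \<tau> - P s \<le> \<bar>s - \<tau>\<bar> * (B + \<epsilon>)" if "s \<in> S" and "\<bar>s - \<tau>\<bar> < \<delta>" for s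
  proof -
    have "\<bar>(s - \<tau>) * D\<bar> \<le> \<bar>s - \<tau>\<bar> * B"
      unfolding abs_mult using D by (simp add: mult_left_mono)
    with \<delta> below[OF that(1)] that show ?thesis
      unfolding touch distrib_left mult.commute[of \<epsilon>] by fastforce
  qed
  with \<open>\<delta> > 0\<close> show ?thesis by blast
qed

lemma SUP_abs_variation_le_integral:
  fixes Z :: "real \<Rightarrow> real \<Rightarrow> real" and F :: "real \<Rightarrow> real"
  assumes ab: "a \<le> b" and sub: "{a..b} \<subseteq> I"
    and Z_diff: "\<forall>t\<in>I. \<forall>r. (\<lambda>s. Z s r) differentiable (at t within I) \<and> (\<lambda>x. Z t x) differentiable (at r)"
    and Z_cont: "continuous_on (I \<times> UNIV) (\<lambda>(t, r). Z t r)" and Z_per: "periodic_r I Z"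
    and F: "continuous_on {a..b} F"
    and crit: "\<And>\<tau> r. \<tau> \<in> {a..b} \<Longrightarrow> dr Z \<tau> r = 0 \<Longrightarrow> \<bar>dtI I Z \<tau> r\<bar> \<le> F \<tau>"
  shows "\<bar>(SUP r. \<bar>Z b r\<bar>) - (SUP r. \<bar>Z a r\<bar>)\<bar> \<le> integral {a..b} F"
proof -
  define P where "P t = (SUP r. \<bar>Z t r\<bar>)" for t
  note abs_Z = continuous_on_periodic_r_abs[OF Z_cont Z_per]
  have "continuous_on {a..b} P"
    unfolding P_def[abs_def] by (rule continuous_on_SUP_periodic_r[OF abs_Z compact_Icc sub])
  moreover have "\<exists>\<delta>>0. \<forall>s\<in>{a..b}. \<bar>s - \<tau>\<bar> < \<delta> \<longrightarrow> P \<tau> - P s \<le> \<bar>s - \<tau>\<bar> * (F \<tau> + \<epsilon>)"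
    if \<tau>: "\<tau> \<in> {a..b}" and \<epsilon>: "\<epsilon> > 0" for \<tau> \<epsilon>
  proof -
    have \<tau>I: "\<tau> \<in> I" using \<tau> sub by blast
    obtain r0 where P\<tau>: "P \<tau> = \<bar>Z \<tau> r0\<bar>" and max: "\<And>x. \<bar>Z \<tau> x\<bar> \<le> \<bar>Z \<tau> r0\<bar>"
      using periodic_r_continuous_SUP_attained[OF abs_Z \<tau>I] unfolding P_def by metis
    have "(Z \<tau> has_real_derivative dr Z \<tau> r0) (at r0)"
      using Z_diff \<tau>I by (simp add: dr_def DERIV_deriv_iff_real_differentiable)
    then have "dr Z \<tau> r0 = 0" using max by (rule DERIV_abs_max_eq_0)
    with crit \<tau> have "\<bar>dtI I Z \<tau> r0\<bar> \<le> F \<tau>" by blast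
    moreover have "((\<lambda>s. Z s r0) has_vector_derivative dtI I Z \<tau> r0) (at \<tau> within {a..b})"
      using Z_diff \<tau>I sub unfolding dtI_def
      by (metis has_vector_derivative_within_subset vector_derivative_works)
    moreover have "\<bar>Z s r0\<bar> \<le> P s" if "s \<in> {a..b}" for s
      unfolding P_def using periodic_r_continuous_le_SUP[OF abs_Z] that sub by blast
    ultimately show ?thesis
      using local_slope_bound_at_touching_point[where z = "\<lambda>s. Z s r0"] P\<tau> \<epsilon> by blast
  qed
  ultimately show ?thesis
    unfolding P_def by (rule abs_diff_le_integral_if_local_slope_bound[OF ab _ F])
qed

section \<open>A priori estimate for a characteristic system\<close>

lemma abs_le_of_exp_weighted_eq:
  fixes D m B1 B2 B3 x1 x2 w V H A K :: real
  assumes eq: "exp (- m) * D = B1 * x1 + B2 * x2 + B3 * w"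
    and B12: "\<bar>exp m * B1\<bar> + \<bar>exp m * B2\<bar> \<le> V" and B3: "\<bar>exp m * B3\<bar> \<le> H"
    and x1: "\<bar>x1\<bar> \<le> A" and x2: "\<bar>x2\<bar> \<le> A" and w: "\<bar>w\<bar> \<le> K"
  shows "\<bar>D\<bar> \<le> V * A + H * K"
proof -
  have "D = (exp m * B1) * x1 + (exp m * B2) * x2 + (exp m * B3) * w"
    using arg_cong[OF eq, of "\<lambda>y. exp m * y"] by (simp add: exp_minus field_simps)
  then have "\<bar>D\<bar> \<le> \<bar>exp m * B1\<bar> * \<bar>x1\<bar> + \<bar>exp m * B2\<bar> * \<bar>x2\<bar> + \<bar>exp m * B3\<bar> * \<bar>w\<bar>"
    unfolding abs_mult[symmetric] by linarith
  also have "\<dots> \<le> \<bar>exp m * B1\<bar> * A + \<bar>exp m * B2\<bar> * A + \<bar>exp m * B3\<bar> * K"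
    by (intro add_mono mult_left_mono x1 x2 w) auto
  also have "\<dots> \<le> V * A + H * K"
    unfolding distrib_right[symmetric]
    using B12 B3 abs_ge_zero[of x1] abs_ge_zero[of w] x1 w by (intro add_mono mult_right_mono) auto
  finally show ?thesis .
qed

text \<open>The coefficients E1 and E2 of the spatial derivatives are arbitrary: the estimates only use
  the equations at points where the spatial derivative vanishes.\<close>

locale characteristic_system =
  fixes I :: "real set" and M E1 E2 B1 B2 B3 B4 B5 V H Z1 Z2 W1 W2 :: "real \<Rightarrow> real \<Rightarrow> real"
  assumes interval: "is_interval I"
    and Z1_C1: "C1_on I Z1" and Z2_C1: "C1_on I Z2"
    and W1_cont: "continuous_on (I \<times> UNIV) (\<lambda>(t, r). W1 t r)"
    and W2_cont: "continuous_on (I \<times> UNIV) (\<lambda>(t, r). W2 t r)"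
    and V_cont: "continuous_on (I \<times> UNIV) (\<lambda>(t, r). V t r)"
    and H_cont: "continuous_on (I \<times> UNIV) (\<lambda>(t, r). H t r)"
    and Z1_per: "periodic_r I Z1" and Z2_per: "periodic_r I Z2"
    and W1_per: "periodic_r I W1" and W2_per: "periodic_r I W2"
    and V_per: "periodic_r I V" and H_per: "periodic_r I H"
    and Z1_eq: "\<forall>t\<in>I. \<forall>r. exp (- M t r) * dtI I Z1 t r + E1 t r * dr Z1 t r
                      = B1 t r * Z1 t r + B2 t r * Z2 t r + B3 t r * W1 t r"
    and Z2_eq: "\<forall>t\<in>I. \<forall>r. exp (- M t r) * dtI I Z2 t r + E2 t r * dr Z2 t r
                      = B2 t r * Z1 t r + B4 t r * Z2 t r + B5 t r * W2 t r"
    and B12: "\<And>t r. t \<in> I \<Longrightarrow> \<bar>exp (M t r) * B1 t r\<bar> + \<bar>exp (M t r) * B2 t r\<bar> \<le> V t r"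
    and B24: "\<And>t r. t \<in> I \<Longrightarrow> \<bar>exp (M t r) * B2 t r\<bar> + \<bar>exp (M t r) * B4 t r\<bar> \<le> V t r"
    and B3: "\<And>t r. t \<in> I \<Longrightarrow> \<bar>exp (M t r) * B3 t r\<bar> \<le> H t r"
    and B5: "\<And>t r. t \<in> I \<Longrightarrow> \<bar>exp (M t r) * B5 t r\<bar> \<le> H t r"
begin

definition rate :: "real \<Rightarrow> real" where
  "rate s = (SUP r. V s r) * (SUP r. sqrt ((Z1 s r)\<^sup>2 + (Z2 s r)\<^sup>2))
            + (SUP r. H s r) * (SUP r. sqrt ((W1 s r)\<^sup>2 + (W2 s r)\<^sup>2))"

lemma Icc_min_max_subset:
  assumes "t \<in> I" and "t0 \<in> I"
  shows "{min t t0..max t t0} \<subseteq> I"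
proof -
  have "{min t t0..max t t0} = closed_segment t t0"
    by (simp add: closed_segment_eq_real_ivl min_def max_def)
  with closed_segment_subset[OF assms is_interval_convex[OF interval]] show ?thesis
    by simp
qed

lemma Z1_cont: "continuous_on (I \<times> UNIV) (\<lambda>(t, r). Z1 t r)"
  and Z2_cont: "continuous_on (I \<times> UNIV) (\<lambda>(t, r). Z2 t r)"
  using Z1_C1 Z2_C1 by (simp_all add: C1_on_def)

lemmas Z_norm = continuous_on_periodic_r_norm[OF Z1_cont Z2_cont Z1_per Z2_per]
lemmas W_norm = continuous_on_periodic_r_norm[OF W1_cont W2_cont W1_per W2_per]

lemma le_SUP:
  assumes "t \<in> I"
  shows "\<bar>Z1 t x\<bar> \<le> (SUP r. sqrt ((Z1 t r)\<^sup>2 + (Z2 t r)\<^sup>2))"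
    and "\<bar>Z2 t x\<bar> \<le> (SUP r. sqrt ((Z1 t r)\<^sup>2 + (Z2 t r)\<^sup>2))"
    and "\<bar>W1 t x\<bar> \<le> (SUP r. sqrt ((W1 t r)\<^sup>2 + (W2 t r)\<^sup>2))"
    and "\<bar>W2 t x\<bar> \<le> (SUP r. sqrt ((W1 t r)\<^sup>2 + (W2 t r)\<^sup>2))"
    and "V t x \<le> (SUP r. V t r)" and "H t x \<le> (SUP r. H t r)"
proof -
  have abs_le_norm: "\<bar>u\<bar> \<le> sqrt (u\<^sup>2 + w\<^sup>2)" "\<bar>w\<bar> \<le> sqrt (u\<^sup>2 + w\<^sup>2)" for u w :: real
    using real_sqrt_sum_squares_ge1[of "\<bar>u\<bar>" w] real_sqrt_sum_squares_ge2[of u "\<bar>w\<bar>"] by simp_all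
  note Z = periodic_r_continuous_le_SUP[OF Z_norm assms, of x]
    and W = periodic_r_continuous_le_SUP[OF W_norm assms, of x]
  show "\<bar>Z1 t x\<bar> \<le> (SUP r. sqrt ((Z1 t r)\<^sup>2 + (Z2 t r)\<^sup>2))"
    and "\<bar>Z2 t x\<bar> \<le> (SUP r. sqrt ((Z1 t r)\<^sup>2 + (Z2 t r)\<^sup>2))"
    using order_trans[OF abs_le_norm(1) Z] order_trans[OF abs_le_norm(2) Z] by simp_all
  show "\<bar>W1 t x\<bar> \<le> (SUP r. sqrt ((W1 t r)\<^sup>2 + (W2 t r)\<^sup>2))"
    and "\<bar>W2 t x\<bar> \<le> (SUP r. sqrt ((W1 t r)\<^sup>2 + (W2 t r)\<^sup>2))"
    using order_trans[OF abs_le_norm(1) W] order_trans[OF abs_le_norm(2) W] by simp_all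
  show "V t x \<le> (SUP r. V t r)" and "H t x \<le> (SUP r. H t r)"
    using periodic_r_continuous_le_SUP[OF V_cont V_per assms] periodic_r_continuous_le_SUP[OF H_cont H_per assms]
    by simp_all
qed

lemma rate_nonneg:
  assumes t: "t \<in> I"
  shows "0 \<le> rate t"
proof -
  have "0 \<le> V t 0" "0 \<le> H t 0"
    using order_trans[OF add_nonneg_nonneg[OF abs_ge_zero abs_ge_zero] B12[OF t]] order_trans[OF abs_ge_zero B3[OF t]]
    by blast+
  then show ?thesis
    unfolding rate_def
    using le_SUP(5,6)[OF t, of 0] order_trans[OF abs_ge_zero le_SUP(1)[OF t]] order_trans[OF abs_ge_zero le_SUP(3)[OF t]]
    by (meson add_nonneg_nonneg mult_nonneg_nonneg order_trans)
qed

lemma continuous_on_rate: "compact K \<Longrightarrow> K \<subseteq> I \<Longrightarrow> continuous_on K rate"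
  unfolding rate_def
  by (intro continuous_intros continuous_on_SUP_periodic_r[where J = I] Z_norm W_norm V_cont V_per H_cont H_per)

lemma critical_dtI_bound:
  assumes t: "t \<in> I"
  shows "dr Z1 t r = 0 \<Longrightarrow> \<bar>dtI I Z1 t r\<bar> \<le> rate t"
    and "dr Z2 t r = 0 \<Longrightarrow> \<bar>dtI I Z2 t r\<bar> \<le> rate t"
proof -
  assume "dr Z1 t r = 0"
  with Z1_eq[rule_format, OF t, of r] have "exp (- M t r) * dtI I Z1 t r = B1 t r * Z1 t r + B2 t r * Z2 t r + B3 t r * W1 t r"
    by simp
  then show "\<bar>dtI I Z1 t r\<bar> \<le> rate t"
    unfolding rate_def
    by (rule abs_le_of_exp_weighted_eq[OF _ order_trans[OF B12 le_SUP(5)] order_trans[OF B3 le_SUP(6)]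
          le_SUP(1,2,3)]) (use t in simp_all)
next
  assume "dr Z2 t r = 0"
  with Z2_eq[rule_format, OF t, of r] have "exp (- M t r) * dtI I Z2 t r = B2 t r * Z1 t r + B4 t r * Z2 t r + B5 t r * W2 t r"
    by simp
  then show "\<bar>dtI I Z2 t r\<bar> \<le> rate t"
    unfolding rate_def
    by (rule abs_le_of_exp_weighted_eq[OF _ order_trans[OF B24 le_SUP(5)] order_trans[OF B5 le_SUP(6)]
          le_SUP(1,2,4)]) (use t in simp_all)
qed

lemma SUP_abs_le_add_integral:
  assumes t: "t \<in> I" and t0: "t0 \<in> I"
  shows "(SUP r. \<bar>Z1 t r\<bar>) \<le> (SUP r. \<bar>Z1 t0 r\<bar>) + integral {min t t0..max t t0} rate"
    and "(SUP r. \<bar>Z2 t r\<bar>) \<le> (SUP r. \<bar>Z2 t0 r\<bar>) + integral {min t t0..max t t0} rate"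
proof -
  define a b where "a = min t t0" and "b = max t t0"
  have ab: "a \<le> b" and sub: "{a..b} \<subseteq> I" and endpoints: "{t, t0} = {a, b}"
    using Icc_min_max_subset[OF t t0] by (auto simp: a_def b_def min_def max_def)
  have diff: "\<forall>t\<in>I. \<forall>r. (\<lambda>s. Z s r) differentiable (at t within I) \<and> (\<lambda>x. Z t x) differentiable (at r)"
    if "C1_on I Z" for Z
    using that by (simp add: C1_on_def)
  have "\<bar>(SUP r. \<bar>Z1 b r\<bar>) - (SUP r. \<bar>Z1 a r\<bar>)\<bar> \<le> integral {a..b} rate"
    and "\<bar>(SUP r. \<bar>Z2 b r\<bar>) - (SUP r. \<bar>Z2 a r\<bar>)\<bar> \<le> integral {a..b} rate"
    using critical_dtI_bound sub
    by (intro SUP_abs_variation_le_integral[OF ab sub] diff Z1_C1 Z2_C1 Z1_cont Z2_cont Z1_per Z2_per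
        continuous_on_rate compact_Icc; force)+
  with endpoints show "(SUP r. \<bar>Z1 t r\<bar>) \<le> (SUP r. \<bar>Z1 t0 r\<bar>) + integral {min t t0..max t t0} rate"
    and "(SUP r. \<bar>Z2 t r\<bar>) \<le> (SUP r. \<bar>Z2 t0 r\<bar>) + integral {min t t0..max t t0} rate"
    unfolding a_def[symmetric] b_def[symmetric] by (auto simp: doubleton_eq_iff)
qed

lemma integral_rate_nonneg:
  assumes "t \<in> I" and "t0 \<in> I"
  shows "0 \<le> integral {min t t0..max t t0} rate"
proof -
  from Icc_min_max_subset[OF assms] show ?thesis
    by (intro integral_nonneg integrable_continuous_interval continuous_on_rate rate_nonneg compact_Icc) auto
qed

lemma SUP_norm_le:
  assumes t: "t \<in> I" and t0: "t0 \<in> I"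
  shows "(SUP r. sqrt ((Z1 t r)\<^sup>2 + (Z2 t r)\<^sup>2))
    \<le> (SUP r. \<bar>Z1 t0 r\<bar>) + (SUP r. \<bar>Z2 t0 r\<bar>) + 2 * integral {min t t0..max t t0} rate"
proof -
  have "sqrt ((Z1 t x)\<^sup>2 + (Z2 t x)\<^sup>2) \<le> (SUP r. \<bar>Z1 t r\<bar>) + (SUP r. \<bar>Z2 t r\<bar>)" for x
    using periodic_r_continuous_le_SUP[OF continuous_on_periodic_r_abs[OF Z1_cont Z1_per] t, of x]
      periodic_r_continuous_le_SUP[OF continuous_on_periodic_r_abs[OF Z2_cont Z2_per] t, of x]
      sqrt_sum_squares_le_sum_abs[of "Z1 t x" "Z2 t x"]
    by linarith
  then have "(SUP r. sqrt ((Z1 t r)\<^sup>2 + (Z2 t r)\<^sup>2)) \<le> (SUP r. \<bar>Z1 t r\<bar>) + (SUP r. \<bar>Z2 t r\<bar>)"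
    by (intro cSUP_least) auto
  with SUP_abs_le_add_integral[OF t t0] show ?thesis
    by linarith
qed

end

section \<open>Coefficients and initial data of the differentiated system\<close>

lemma exp_weighted_b1_b2_bound:
  fixes t m l ld q Q :: real
  assumes t: "t > 0" and q: "\<bar>q\<bar> \<le> Q"
  shows "\<bar>exp m * ((- 2 * ld - 1/t) * exp (- m) + q * exp (- l))\<bar> + \<bar>exp m * (- exp (- m) / t)\<bar>
         \<le> 2 / t + 2 * \<bar>ld\<bar> + Q * exp (m - l)"
proof -
  have "exp m * ((- 2 * ld - 1/t) * exp (- m) + q * exp (- l)) = (- 2 * ld - 1/t) + q * exp (m - l)"
    by (simp add: exp_diff exp_minus field_simps)
  moreover have "\<bar>exp m * (- exp (- m) / t)\<bar> = 1 / t"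
    using t by (simp add: exp_minus)
  moreover have "\<bar>- 2 * ld - 1/t\<bar> \<le> 2 * \<bar>ld\<bar> + 1/t"
    using t abs_ge_self[of ld] abs_ge_minus_self[of ld] divide_pos_pos[OF zero_less_one t]
    unfolding abs_le_iff by linarith
  moreover have "\<bar>q * exp (m - l)\<bar> \<le> Q * exp (m - l)"
    using q by (simp add: abs_mult)
  ultimately show ?thesis
    using abs_triangle_ineq[of "- 2 * ld - 1/t" "q * exp (m - l)"] by linarith
qed

lemma exp_weighted_b3_bound:
  fixes m l dld q Q :: real
  assumes q: "\<bar>q\<bar> \<le> Q"
  shows "\<bar>exp m * (- dld * exp (- m - l) + q * exp (- 2 * l))\<bar> \<le> \<bar>dld\<bar> * exp (- l) + Q * exp (m - 2 * l)"
proof -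
  have "exp m * (- dld * exp (- m - l) + q * exp (- 2 * l)) = - dld * exp (- l) + q * exp (m - 2 * l)"
    by (simp add: exp_diff exp_minus field_simps)
  moreover have "\<bar>- dld * exp (- l)\<bar> = \<bar>dld\<bar> * exp (- l)"
    by (simp add: abs_mult)
  moreover have "\<bar>q * exp (m - 2 * l)\<bar> \<le> Q * exp (m - 2 * l)"
    using q by (simp add: abs_mult)
  ultimately show ?thesis
    using abs_triangle_ineq[of "- dld * exp (- l)" "q * exp (m - 2 * l)"] by linarith
qed

text \<open>In the following lemma m, l, mt stand for the values of mu, lam, mut at a point (t, r), the
  letter d marks their r-derivatives, ld is the t-derivative of lam and dld its r-derivative; the four
  left-hand sides are then exp mu times b1 and b2, b2 and b4, b3, b5.\<close>

lemma b_coefficient_bounds: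
  fixes t m l ld dld dm dl mt dmt :: real
  assumes t: "t > 0"
  defines "v \<equiv> 2 / t + 2 * \<bar>ld\<bar> + (\<bar>mt\<bar> + \<bar>dm\<bar>) * exp (m - l)"
    and "h \<equiv> \<bar>dld\<bar> * exp (- l) + (\<bar>dm\<bar> * \<bar>mt\<bar> + \<bar>dl\<bar> * \<bar>mt\<bar> + \<bar>dmt\<bar>) * exp (m - 2 * l)"
  shows "\<bar>exp m * ((- 2 * ld - 1/t) * exp (- m) - (mt + dm) * exp (- l))\<bar> + \<bar>exp m * (- exp (- m) / t)\<bar> \<le> v"
    and "\<bar>exp m * (- exp (- m) / t)\<bar> + \<bar>exp m * ((- 2 * ld - 1/t) * exp (- m) + (mt + dm) * exp (- l))\<bar> \<le> v"
    and "\<bar>exp m * (- dld * exp (- m - l) + (dl * mt - mt * dm - dmt) * exp (- 2 * l))\<bar> \<le> h"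
    and "\<bar>exp m * (- dld * exp (- m - l) - (dl * mt - mt * dm - dmt) * exp (- 2 * l))\<bar> \<le> h"
proof -
  have b1: "(- 2 * ld - 1/t) * exp (- m) - (mt + dm) * exp (- l)
      = (- 2 * ld - 1/t) * exp (- m) + (- (mt + dm)) * exp (- l)"
    by (simp add: algebra_simps)
  show "\<bar>exp m * ((- 2 * ld - 1/t) * exp (- m) - (mt + dm) * exp (- l))\<bar> + \<bar>exp m * (- exp (- m) / t)\<bar> \<le> v"
    unfolding b1 v_def by (intro exp_weighted_b1_b2_bound t) (simp add: abs_triangle_ineq)
  show "\<bar>exp m * (- exp (- m) / t)\<bar> + \<bar>exp m * ((- 2 * ld - 1/t) * exp (- m) + (mt + dm) * exp (- l))\<bar> \<le> v"
    unfolding v_def add.commute[of "\<bar>exp m * (- exp (- m) / t)\<bar>"]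
    by (intro exp_weighted_b1_b2_bound t abs_triangle_ineq)
  have q: "\<bar>dl * mt - mt * dm - dmt\<bar> \<le> \<bar>dm\<bar> * \<bar>mt\<bar> + \<bar>dl\<bar> * \<bar>mt\<bar> + \<bar>dmt\<bar>"
    using abs_triangle_ineq4[of "dl * mt - mt * dm" dmt] abs_triangle_ineq4[of "dl * mt" "mt * dm"]
    by (simp add: abs_mult mult.commute[of "\<bar>mt\<bar>"])
  then show "\<bar>exp m * (- dld * exp (- m - l) + (dl * mt - mt * dm - dmt) * exp (- 2 * l))\<bar> \<le> h"
    unfolding h_def by (rule exp_weighted_b3_bound)
  have b5: "- dld * exp (- m - l) - (dl * mt - mt * dm - dmt) * exp (- 2 * l)
      = - dld * exp (- m - l) + (- (dl * mt - mt * dm - dmt)) * exp (- 2 * l)"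
    by (simp add: algebra_simps)
  show "\<bar>exp m * (- dld * exp (- m - l) - (dl * mt - mt * dm - dmt) * exp (- 2 * l))\<bar> \<le> h"
    unfolding b5 h_def by (rule exp_weighted_b3_bound) (simp only: abs_minus_cancel q)
qed

lemma exp_weighted_initial_deriv_bound:
  fixes m l p q :: "real \<Rightarrow> real" and \<sigma> :: real
  assumes \<sigma>: "\<bar>\<sigma>\<bar> \<le> 1"
    and diff: "m differentiable (at r)" "l differentiable (at r)" "p differentiable (at r)" "q differentiable (at r)"
  shows "\<bar>exp (- l r) * deriv (\<lambda>x. exp (- m x) * p x + \<sigma> * (exp (- l x) * q x)) r\<bar>
    \<le> (\<bar>deriv p r\<bar> + \<bar>deriv m r\<bar> * \<bar>p r\<bar>) * exp (- m r - l r)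
       + (\<bar>deriv q r\<bar> + \<bar>deriv l r\<bar> * \<bar>q r\<bar>) * exp (- 2 * l r)"
proof -
  have "((\<lambda>x. exp (- m x) * p x + \<sigma> * (exp (- l x) * q x)) has_real_derivative
      exp (- m r) * (deriv p r - deriv m r * p r) + \<sigma> * (exp (- l r) * (deriv q r - deriv l r * q r))) (at r)"
    using diff unfolding DERIV_deriv_iff_real_differentiable[symmetric]
    by (auto intro!: derivative_eq_intros simp: algebra_simps)
  then have dz: "deriv (\<lambda>x. exp (- m x) * p x + \<sigma> * (exp (- l x) * q x)) r
      = exp (- m r) * (deriv p r - deriv m r * p r) + \<sigma> * (exp (- l r) * (deriv q r - deriv l r * q r))"
    by (rule DERIV_imp_deriv)
  have e: "exp (- m r - l r) = exp (- l r) * exp (- m r)" "exp (- 2 * l r) = exp (- l r) * exp (- l r)"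
    by (simp_all flip: exp_add)
  have "exp (- l r) * deriv (\<lambda>x. exp (- m x) * p x + \<sigma> * (exp (- l x) * q x)) r
      = (deriv p r - deriv m r * p r) * exp (- m r - l r) + \<sigma> * ((deriv q r - deriv l r * q r) * exp (- 2 * l r))"
    unfolding dz e by (simp add: algebra_simps)
  also have "\<bar>\<dots>\<bar> \<le> \<bar>deriv p r - deriv m r * p r\<bar> * exp (- m r - l r)
      + \<bar>\<sigma>\<bar> * \<bar>deriv q r - deriv l r * q r\<bar> * exp (- 2 * l r)"
    by (rule order_trans[OF abs_triangle_ineq]) (simp add: abs_mult mult.assoc)
  also have "\<dots> \<le> (\<bar>deriv p r\<bar> + \<bar>deriv m r\<bar> * \<bar>p r\<bar>) * exp (- m r - l r)
       + (\<bar>deriv q r\<bar> + \<bar>deriv l r\<bar> * \<bar>q r\<bar>) * exp (- 2 * l r)"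
  proof -
    have "\<bar>deriv p r - deriv m r * p r\<bar> \<le> \<bar>deriv p r\<bar> + \<bar>deriv m r\<bar> * \<bar>p r\<bar>"
      "\<bar>deriv q r - deriv l r * q r\<bar> \<le> \<bar>deriv q r\<bar> + \<bar>deriv l r\<bar> * \<bar>q r\<bar>"
      by (simp_all add: abs_mult[symmetric] abs_triangle_ineq4)
    moreover have "\<bar>\<sigma>\<bar> * \<bar>deriv q r - deriv l r * q r\<bar> \<le> \<bar>deriv q r - deriv l r * q r\<bar>"
      using \<sigma> by (simp add: mult_left_le_one_le)
    ultimately show ?thesis
      by (intro add_mono mult_right_mono) auto
  qed
  finally show ?thesis .
qed

lemma SUP_exp_weighted_initial_deriv_le:
  fixes m l p q :: "real \<Rightarrow> real" and \<sigma> :: real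
  assumes C1: "C1_real m" "C1_real l" "C1_real p" "C1_real q"
    and per: "periodic1 m" "periodic1 l" "periodic1 p" "periodic1 q" and \<sigma>: "\<bar>\<sigma>\<bar> \<le> 1"
  shows "(SUP r. \<bar>exp (- l r) * deriv (\<lambda>x. exp (- m x) * p x + \<sigma> * (exp (- l x) * q x)) r\<bar>)
    \<le> (SUP r. (\<bar>deriv p r\<bar> + \<bar>deriv m r\<bar> * \<bar>p r\<bar>) * exp (- m r - l r)
              + (\<bar>deriv q r\<bar> + \<bar>deriv l r\<bar> * \<bar>q r\<bar>) * exp (- 2 * l r))"
    (is "(SUP r. ?D r) \<le> (SUP r. ?S r)")
proof (rule cSUP_least)
  fix r
  have "continuous_on UNIV ?S"
    using C1 C1_real_continuous[OF C1(1)] C1_real_continuous[OF C1(2)] C1_real_continuous[OF C1(3)]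
      C1_real_continuous[OF C1(4)]
    by (auto simp: C1_real_def intro!: continuous_intros)
  moreover have "periodic1 ?S"
    using per periodic1_deriv[OF per(1)] periodic1_deriv[OF per(2)] periodic1_deriv[OF per(3)]
      periodic1_deriv[OF per(4)]
    by (simp add: periodic1_def)
  ultimately have "?S r \<le> (SUP r. ?S r)"
    by (rule periodic1_continuous_le_SUP[rotated])
  moreover have "?D r \<le> ?S r"
    using C1 by (intro exp_weighted_initial_deriv_bound \<sigma>) (auto simp: C1_real_def)
  ultimately show "?D r \<le> (SUP r. ?S r)" by linarith
qed simp

lemma SUP_abs_initial_le:
  fixes mu lam Z Z1 :: "real \<Rightarrow> real \<Rightarrow> real" and psi phi :: "real \<Rightarrow> real" and \<sigma> :: real
  assumes t0: "t0 \<in> I" and mu: "C1_on I mu" "periodic_r I mu" and lam: "C1_on I lam" "periodic_r I lam"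
    and psi: "C1_real psi" "periodic1 psi" and phi: "C2_real phi" "periodic1 phi" and \<sigma>: "\<bar>\<sigma>\<bar> \<le> 1"
    and Z: "\<forall>r. Z t0 r = exp (- mu t0 r) * psi r + \<sigma> * (exp (- lam t0 r) * deriv phi r)"
    and Z1: "\<forall>r. Z1 t0 r = exp (- lam t0 r) * dr Z t0 r"
  shows "(SUP r. \<bar>Z1 t0 r\<bar>)
    \<le> (SUP r. (\<bar>deriv psi r\<bar> + \<bar>dr mu t0 r\<bar> * \<bar>psi r\<bar>) * exp (- mu t0 r - lam t0 r)
              + (\<bar>deriv (deriv phi) r\<bar> + \<bar>dr lam t0 r\<bar> * \<bar>deriv phi r\<bar>) * exp (- 2 * lam t0 r))"
proof -
  have "Z t0 = (\<lambda>x. exp (- mu t0 x) * psi x + \<sigma> * (exp (- lam t0 x) * deriv phi x))"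
    using Z by auto
  with Z1 have "(SUP r. \<bar>Z1 t0 r\<bar>)
      = (SUP r. \<bar>exp (- lam t0 r) * deriv (\<lambda>x. exp (- mu t0 x) * psi x + \<sigma> * (exp (- lam t0 x) * deriv phi x)) r\<bar>)"
    by (simp add: dr_def)
  also have "\<dots> \<le> (SUP r. (\<bar>deriv psi r\<bar> + \<bar>dr mu t0 r\<bar> * \<bar>psi r\<bar>) * exp (- mu t0 r - lam t0 r)
              + (\<bar>deriv (deriv phi) r\<bar> + \<bar>dr lam t0 r\<bar> * \<bar>deriv phi r\<bar>) * exp (- 2 * lam t0 r))"
    unfolding dr_def
    using C1_on_slice_C1_real[OF mu(1) t0] C1_on_slice_C1_real[OF lam(1) t0] psi
      C2_real_deriv_C1_real[OF phi(1)] mu(2) lam(2) phi(2) periodic1_deriv[OF phi(2)] t0 \<sigma>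
    by (intro SUP_exp_weighted_initial_deriv_le) (auto simp: periodic_r_iff_periodic1)
  finally show ?thesis .
qed

theorem proposition2p5:
  fixes I :: "real set"
    and lam mu mut X Y X1 Y1 :: "real \<Rightarrow> real \<Rightarrow> real"
    and psi phi :: "real \<Rightarrow> real"
  assumes I_int: "is_interval I" and I_one: "1 \<in> I" and I_pos: "I \<subseteq> {0<..}"
    and lam_C1: "C1_on I lam" and mu_C1: "C1_on I mu" and mut_C1: "C1_on I mut"
    and lamdot_C1: "C1_on I (dtI I lam)"
    and lam_per: "periodic_r I lam" and mu_per: "periodic_r I mu" and mut_per: "periodic_r I mut"
    and psi_C1: "C1_real psi" and phi_C2: "C2_real phi"
    and psi_per: "periodic1 psi" and phi_per: "periodic1 phi"
    and a_def: "a \<equiv> (\<lambda>t r. (- dtI I lam t r - 1/t) * exp (- mu t r) - mut t r * exp (- lam t r))"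
    and b_def: "b \<equiv> (\<lambda>t r. - exp (- mu t r) / t)"
    and c_def: "c \<equiv> (\<lambda>t r. (- dtI I lam t r - 1/t) * exp (- mu t r) + mut t r * exp (- lam t r))"
    and b1_def: "b1 \<equiv> (\<lambda>t r. (- 2 * dtI I lam t r - 1/t) * exp (- mu t r)
                           - (mut t r + dr mu t r) * exp (- lam t r))"
    and b2_def: "b2 \<equiv> (\<lambda>t r. - exp (- mu t r) / t)"
    and b3_def: "b3 \<equiv> (\<lambda>t r. - dr (dtI I lam) t r * exp (- mu t r - lam t r)
           + (dr lam t r * mut t r - mut t r * dr mu t r - dr mut t r) * exp (- 2 * lam t r))"
    and b4_def: "b4 \<equiv> (\<lambda>t r. (- 2 * dtI I lam t r - 1/t) * exp (- mu t r)
                           + (mut t r + dr mu t r) * exp (- lam t r))"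
    and b5_def: "b5 \<equiv> (\<lambda>t r. - dr (dtI I lam) t r * exp (- mu t r - lam t r)
           - (dr lam t r * mut t r - mut t r * dr mu t r - dr mut t r) * exp (- 2 * lam t r))"
    and X_C1: "C1_on I X" and Y_C1: "C1_on I Y"
    and X_per: "periodic_r I X" and Y_per: "periodic_r I Y"
    and X_eq: "\<forall>t\<in>I. \<forall>r. exp (- mu t r) * dtI I X t r + exp (- lam t r) * dr X t r
                          = a t r * X t r + b t r * Y t r"
    and Y_eq: "\<forall>t\<in>I. \<forall>r. exp (- mu t r) * dtI I Y t r - exp (- lam t r) * dr Y t r
                          = b t r * X t r + c t r * Y t r"
    and X_init: "\<forall>r. X 1 r = exp (- mu 1 r) * psi r - exp (- lam 1 r) * deriv phi r"
    and Y_init: "\<forall>r. Y 1 r = exp (- mu 1 r) * psi r + exp (- lam 1 r) * deriv phi r"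
    and X1_C1: "C1_on I X1" and Y1_C1: "C1_on I Y1"
    and X1_per: "periodic_r I X1" and Y1_per: "periodic_r I Y1"
    and X1_eq: "\<forall>t\<in>I. \<forall>r. exp (- mu t r) * dtI I X1 t r + exp (- lam t r) * dr X1 t r
                          = b1 t r * X1 t r + b2 t r * Y1 t r + b3 t r * X t r"
    and Y1_eq: "\<forall>t\<in>I. \<forall>r. exp (- mu t r) * dtI I Y1 t r - exp (- lam t r) * dr Y1 t r
                          = b2 t r * X1 t r + b4 t r * Y1 t r + b5 t r * Y t r"
    and X1_init: "\<forall>r. X1 1 r = exp (- lam 1 r) * dr X 1 r"
    and Y1_init: "\<forall>r. Y1 1 r = exp (- lam 1 r) * dr Y 1 r"
    and K_def: "K \<equiv> (\<lambda>t. SUP r. sqrt ((X t r)\<^sup>2 + (Y t r)\<^sup>2))"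
    and A0_def: "A0 \<equiv> 2 * (SUP r. (\<bar>deriv psi r\<bar> + \<bar>dr mu 1 r\<bar> * \<bar>psi r\<bar>) * exp (- mu 1 r - lam 1 r)
                     + (\<bar>deriv (deriv phi) r\<bar> + \<bar>dr lam 1 r\<bar> * \<bar>deriv phi r\<bar>) * exp (- 2 * lam 1 r))"
    and A_def: "A \<equiv> (\<lambda>t. SUP r. sqrt ((X1 t r)\<^sup>2 + (Y1 t r)\<^sup>2))"
    and v_def: "v \<equiv> (\<lambda>t. SUP r. 2 / t + 2 * \<bar>dtI I lam t r\<bar>
                        + (\<bar>mut t r\<bar> + \<bar>dr mu t r\<bar>) * exp (mu t r - lam t r))"
    and h_def: "h \<equiv> (\<lambda>t. SUP r. \<bar>dr (dtI I lam) t r\<bar> * exp (- lam t r)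
        + (\<bar>dr mu t r\<bar> * \<bar>mut t r\<bar> + \<bar>dr lam t r\<bar> * \<bar>mut t r\<bar> + \<bar>dr mut t r\<bar>) * exp (mu t r - 2 * lam t r))"
  shows "\<forall>t\<in>I. (t \<le> 1 \<longrightarrow> A t \<le> A0 + 3 * integral {t..1} (\<lambda>s. v s * A s + h s * K s))
             \<and> (1 \<le> t \<longrightarrow> A t \<le> A0 + 3 * integral {1..t} (\<lambda>s. v s * A s + h s * K s))"
proof -
  have t_pos: "\<tau> > 0" if "\<tau> \<in> I" for \<tau>
    using I_pos that by auto
  define V where "V t r = 2 / t + 2 * \<bar>dtI I lam t r\<bar> + (\<bar>mut t r\<bar> + \<bar>dr mu t r\<bar>) * exp (mu t r - lam t r)"
    for t r
  define H where "H t r = \<bar>dr (dtI I lam) t r\<bar> * exp (- lam t r)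
      + (\<bar>dr mu t r\<bar> * \<bar>mut t r\<bar> + \<bar>dr lam t r\<bar> * \<bar>mut t r\<bar> + \<bar>dr mut t r\<bar>) * exp (mu t r - 2 * lam t r)"
    for t r
  note cont = C1_on_continuous_on[OF lam_C1] C1_on_continuous_on[OF mu_C1] C1_on_continuous_on[OF mut_C1]
    C1_on_continuous_on[OF lamdot_C1]
  have V_cont: "continuous_on (I \<times> UNIV) (\<lambda>(t, r). V t r)"
    unfolding V_def case_prod_unfold using t_pos by (intro continuous_intros cont) force
  have H_cont: "continuous_on (I \<times> UNIV) (\<lambda>(t, r). H t r)"
    unfolding H_def case_prod_unfold by (intro continuous_intros cont)
  have V_per: "periodic_r I V" and H_per: "periodic_r I H"
    using periodic_r_dtI[OF lam_per] periodic_r_dr[OF periodic_r_dtI[OF lam_per]] periodic_r_dr[OF mu_per]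
      periodic_r_dr[OF lam_per] periodic_r_dr[OF mut_per] lam_per mu_per mut_per
    by (simp_all add: periodic_r_def V_def H_def)
  have Y1_eq': "\<forall>\<tau>\<in>I. \<forall>r. exp (- mu \<tau> r) * dtI I Y1 \<tau> r + (- exp (- lam \<tau> r)) * dr Y1 \<tau> r
      = b2 \<tau> r * X1 \<tau> r + b4 \<tau> r * Y1 \<tau> r + b5 \<tau> r * Y \<tau> r"
    using Y1_eq by simp
  have B: "\<bar>exp (mu \<tau> r) * b1 \<tau> r\<bar> + \<bar>exp (mu \<tau> r) * b2 \<tau> r\<bar> \<le> V \<tau> r"
    "\<bar>exp (mu \<tau> r) * b2 \<tau> r\<bar> + \<bar>exp (mu \<tau> r) * b4 \<tau> r\<bar> \<le> V \<tau> r"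
    "\<bar>exp (mu \<tau> r) * b3 \<tau> r\<bar> \<le> H \<tau> r" "\<bar>exp (mu \<tau> r) * b5 \<tau> r\<bar> \<le> H \<tau> r"
    if "\<tau> \<in> I" for \<tau> r
    unfolding b1_def b2_def b3_def b4_def b5_def V_def H_def
    using b_coefficient_bounds[OF t_pos[OF that]] by fast+
  interpret characteristic_system I mu "\<lambda>t r. exp (- lam t r)" "\<lambda>t r. - exp (- lam t r)" b1 b2 b3 b4 b5 V H X1 Y1 X Y
    using I_int X1_C1 Y1_C1 X_C1 Y_C1 V_cont H_cont X1_per Y1_per X_per Y_per V_per H_per X1_eq Y1_eq' B
    by unfold_locales (simp_all add: C1_on_def)
  have "(SUP r. \<bar>X1 1 r\<bar>) + (SUP r. \<bar>Y1 1 r\<bar>) \<le> A0"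
    using SUP_abs_initial_le[OF I_one mu_C1 mu_per lam_C1 lam_per psi_C1 psi_per phi_C2 phi_per, of "-1" X X1]
      SUP_abs_initial_le[OF I_one mu_C1 mu_per lam_C1 lam_per psi_C1 psi_per phi_C2 phi_per, of 1 Y Y1]
      X_init Y_init X1_init Y1_init
    unfolding A0_def by simp
  then have main: "A t \<le> A0 + 3 * integral {min t 1..max t 1} (\<lambda>s. v s * A s + h s * K s)"
    if "t \<in> I" for t
    using SUP_norm_le[OF that I_one] integral_rate_nonneg[OF that I_one]
    unfolding v_def A_def h_def K_def rate_def[abs_def] V_def H_def by linarith
  show ?thesis
  proof (intro ballI conjI impI)
    fix t assume "t \<in> I"
    show "A t \<le> A0 + 3 * integral {t..1} (\<lambda>s. v s * A s + h s * K s)" if "t \<le> 1"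
      using main[OF \<open>t \<in> I\<close>] that by (simp add: min_absorb1 max_absorb2)
    show "A t \<le> A0 + 3 * integral {1..t} (\<lambda>s. v s * A s + h s * K s)" if "1 \<le> t"
      using main[OF \<open>t \<in> I\<close>] that by (simp add: min_absorb2 max_absorb1)
  qed
qed

end
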